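(* Let $a,b>0$ be constants. Let $G=(V,E)$ be a graph with $n$ vertices, $m\ge1$ edges, degeneracy $d$, clique number $\omega$ and clique distance $\sigma$, and let $(\mathcal{C},\mathcal{L})$ be a DCC representation of $G$ with $\mathcal{C}=\{C_\ell\}_{\ell\in I}$ composition-minimal, $\|\mathcal{C}\|\le a\,m$ and $|\mathcal{C}|\le b\,\sigma$. Then there is a constant $c$ depending only on $a,b$ such that $$\frac{1}{\binom{n}{2}}\sum_{\{u,v\}\subseteq V,\,u\ne v}\min\{|L_u|,|L_v|\}\le c\,\min\{\sigma,d\}\quad\text{and}\quad \frac1n\sum_{v\in V}\sum_{\ell\in L_v}|C_\ell|\le c\,\omega\,\min\{\sigma,d\}.$$
   Context: All graphs are finite, simple, undirected, with no isolated vertices; $n=|V|$, $m=|E|$. A non-edge is an unordered pair of distinct non-adjacent vertices. A clique is a vertex set inducing a complete subgraph; $\omega$ is the maximum clique size. Clique distance $\sigma:=\binom{n}{2}-m+1$. Degeneracy $d:=\max_{H}\delta_H$ over all subgraphs $H$ of $G$, where $\delta_H$ is the minimum degree of $H$. $\|\mathcal{F}\|:=\sum_{F\in\mathcal{F}}|F|$. A clique cover is an indexed family $\{C_\ell\}_{\ell\in I}$ of cliques of $G$ covering every edge; composition-minimal means that for all distinct indices $i\ne j$ there are $u\in C_i$, $v\in C_j$ with $\{u,v\}$ a non-edge. A DCC representation is a pair $(\mathcal{C},\mathcal{L})$ with $\mathcal{C}$ a clique cover and $\mathcal{L}=\{L_v\}_{v\in V}$, $L_v=\{\ell\in I: v\in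 C_\ell\}$. *)

theory Defs
  imports Complex_Main
begin

definition simple_graph :: "nat set \<Rightarrow> nat set set \<Rightarrow> bool" where
  "simple_graph V E \<longleftrightarrow> finite V \<and> (\<forall>e\<in>E. e \<subseteq> V \<and> card e = 2)
     \<and> (\<forall>v\<in>V. \<exists>e\<in>E. v \<in> e)"

definition is_nonedge :: "nat set \<Rightarrow> nat set set \<Rightarrow> nat \<Rightarrow> nat \<Rightarrow> bool" where
  "is_nonedge V E u v \<longleftrightarrow> u \<in> V \<and> v \<in> V \<and> u \<noteq> v \<and> {u, v} \<notin> E"

definition is_clique :: "nat set \<Rightarrow> nat set set \<Rightarrow> nat set \<Rightarrow> bool" where
  "is_clique V E K \<longleftrightarrow> K \<subseteq> V \<and> (\<forall>u\<in>K. \<forall>v\<in>K. u \<noteq> v \<longrightarrow> {u, v} \<in> E)"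

definition clique_number :: "nat set \<Rightarrow> nat set set \<Rightarrow> nat" where
  "clique_number V E = Max {card K | K. is_clique V E K}"

definition clique_distance :: "nat set \<Rightarrow> nat set set \<Rightarrow> nat" where
  "clique_distance V E = (card V choose 2) - card E + 1"

definition is_subgraph :: "nat set \<Rightarrow> nat set set \<Rightarrow> nat set \<Rightarrow> nat set set \<Rightarrow> bool" where
  "is_subgraph V E W F \<longleftrightarrow> W \<subseteq> V \<and> W \<noteq> {} \<and> F \<subseteq> E \<and> (\<forall>e\<in>F. e \<subseteq> W)"

definition min_degree :: "nat set \<Rightarrow> nat set set \<Rightarrow> nat" where
  "min_degree W F = Min ((\<lambda>v. card {e\<in>F. v \<in> e}) ` W)"

definition degeneracy :: "nat set \<Rightarrow> nat set set \<Rightarrow> nat" where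
  "degeneracy V E = Max {min_degree W F | W F. is_subgraph V E W F}"

definition clique_cover :: "nat set \<Rightarrow> nat set set \<Rightarrow> nat set \<Rightarrow> (nat \<Rightarrow> nat set) \<Rightarrow> bool" where
  "clique_cover V E I C \<longleftrightarrow> finite I \<and> (\<forall>l\<in>I. is_clique V E (C l))
     \<and> (\<forall>e\<in>E. \<exists>l\<in>I. e \<subseteq> C l)"

definition composition_minimal :: "nat set \<Rightarrow> nat set set \<Rightarrow> nat set \<Rightarrow> (nat \<Rightarrow> nat set) \<Rightarrow> bool" where
  "composition_minimal V E I C \<longleftrightarrow>
     (\<forall>i\<in>I. \<forall>j\<in>I. i \<noteq> j \<longrightarrow> (\<exists>u\<in>C i. \<exists>v\<in>C j. is_nonedge V E u v))"

definition Llist :: "nat set \<Rightarrow> (nat \<Rightarrow> nat set) \<Rightarrow> nat \<Rightarrow> nat set" where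
  "Llist I C v = {l\<in>I. v \<in> C l}"

definition cover_size :: "nat set \<Rightarrow> (nat \<Rightarrow> nat set) \<Rightarrow> nat" where
  "cover_size I C = (\<Sum>l\<in>I. card (C l))"

end

theory Submission
  imports Defs
begin

text \<open>Exchanging the order of summation turns \<open>\<Sum>\<^sub>v |L\<^sub>v|\<close> into \<open>\<parallel>\<C>\<parallel>\<close> and
\<open>\<Sum>\<^sub>v \<Sum>\<^bsub>\<ell> \<in> L\<^sub>v\<^esub> |C\<^sub>\<ell>|\<close> into \<open>\<Sum>\<^sub>\<ell> |C\<^sub>\<ell>|\<^sup>2\<close>, and every clique has at most
\<open>\<omega> \<le> n\<close> vertices. The minimum over a pair is at most \<open>|I| \<le> b\<sigma>\<close> and at most
\<open>|L\<^sub>u| + |L\<^sub>v|\<close>, where each vertex lies in \<open>n - 1\<close> pairs. Finally \<open>m \<le> n d\<close>, since a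
densest subgraph has minimum degree at least its edge density. Hence the two averages
are at most \<open>min (b\<sigma>) (2ad)\<close> and \<open>\<omega> min (b\<sigma>) (ad)\<close>, and \<open>c = 2a + b\<close> works.\<close>

definition induced_edges :: "'a set set \<Rightarrow> 'a set \<Rightarrow> 'a set set" where
  "induced_edges E W = {e \<in> E. e \<subseteq> W}"

lemma card_induced_edges_le_min_degree:
  assumes "finite E" and edges: "\<forall>e\<in>E. card e = 2" and "finite W" "W \<noteq> {}"
    and densest: "\<And>W'. W' \<subseteq> W \<Longrightarrow> W' \<noteq> {} \<Longrightarrow>
      card (induced_edges E W') * card W \<le> card (induced_edges E W) * card W'"
  shows "card (induced_edges E W) \<le> card W * min_degree W (induced_edges E W)"
proof -
  let ?F = "induced_edges E W"
  have degree: "card ?F \<le> card W * card {e \<in> ?F. v \<in> e}" if "v \<in> W" for v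
  proof (cases "W = {v}")
    case True
    have "\<not> e \<subseteq> {v}" if "e \<in> E" for e
      using edges that by (auto dest!: subset_singletonD)
    then have "?F = {}" unfolding induced_edges_def True by blast
    then show ?thesis by simp
  next
    case False
    let ?F' = "induced_edges E (W - {v})" and ?D = "{e \<in> ?F. v \<in> e}"
    have "?F = ?F' \<union> ?D" "?F' \<inter> ?D = {}" by (auto simp: induced_edges_def)
    moreover have "finite ?F" using assms(1) by (simp add: induced_edges_def)
    ultimately have F: "card ?F = card ?F' + card ?D"
      by (metis card_Un_disjoint finite_Un)
    have W: "card W = card (W - {v}) + 1" using card_Suc_Diff1[OF assms(3) that] by simp
    have "card ?F' * card W \<le> card ?F * card (W - {v})"
      using densest[of "W - {v}"] False that by auto
    then show ?thesis unfolding F W by (simp add: algebra_simps)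
  qed
  have "min_degree W ?F \<in> (\<lambda>v. card {e \<in> ?F. v \<in> e}) ` W"
    unfolding min_degree_def using assms(3,4) by (intro Min_in) auto
  then show ?thesis using degree by auto
qed

lemma finite_edges: "simple_graph V E \<Longrightarrow> finite E"
  unfolding simple_graph_def by (meson Pow_iff finite_Pow_iff finite_subset subsetI)

lemma min_degree_le_degeneracy:
  assumes "finite V" "finite E" "is_subgraph V E W F"
  shows "min_degree W F \<le> degeneracy V E"
proof -
  have "{min_degree W F | W F. is_subgraph V E W F} \<subseteq> (\<lambda>(W, F). min_degree W F) ` (Pow V \<times> Pow E)"
    unfolding is_subgraph_def by auto
  then have "finite {min_degree W F | W F. is_subgraph V E W F}"
    by (rule finite_subset) (use assms(1,2) in simp)
  moreover have "min_degree W F \<in> {min_degree W F | W F. is_subgraph V E W F}"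
    using assms(3) by blast
  ultimately show ?thesis unfolding degeneracy_def by (rule Max_ge)
qed

lemma ex_densest_subset:
  assumes "finite V" "V \<noteq> {}"
  obtains W where "W \<subseteq> V" "W \<noteq> {}"
    "\<And>W'. W' \<subseteq> V \<Longrightarrow> W' \<noteq> {} \<Longrightarrow>
      card (induced_edges E W') * card W \<le> card (induced_edges E W) * card W'"
proof -
  define Ws where "Ws = {W. W \<subseteq> V \<and> W \<noteq> {}}"
  define density where "density W = real (card (induced_edges E W)) / real (card W)" for W
  have "finite Ws" "V \<in> Ws" using assms unfolding Ws_def by auto
  then have "Max (density ` Ws) \<in> density ` Ws" by (intro Max_in) auto
  then obtain W where W: "W \<in> Ws" and W_max: "density W = Max (density ` Ws)" by auto
  have Ws_card: "card W' > 0" if "W' \<in> Ws" for W'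
    using that assms(1) rev_finite_subset unfolding Ws_def by (fastforce simp: card_gt_0_iff)
  have "card (induced_edges E W') * card W \<le> card (induced_edges E W) * card W'"
    if "W' \<in> Ws" for W'
  proof -
    have "density W' \<le> density W" unfolding W_max using \<open>finite Ws\<close> that by simp
    then have "real (card (induced_edges E W')) * real (card W)
        \<le> real (card (induced_edges E W)) * real (card W')"
      using Ws_card[OF that] Ws_card[OF W] by (simp add: density_def field_simps)
    then show ?thesis by (simp flip: of_nat_mult)
  qed
  then show ?thesis using that W unfolding Ws_def by blast
qed

lemma card_edges_le_card_mult_degeneracy:
  assumes G: "simple_graph V E"
  shows "card E \<le> card V * degeneracy V E"
proof (cases "V = {}")
  case True
  then have "E = {}" using G by (force simp: simple_graph_def)
  then show ?thesis by simp
next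
  case False
  have fin: "finite V" "finite E" and edges: "\<forall>e\<in>E. e \<subseteq> V \<and> card e = 2"
    using G finite_edges unfolding simple_graph_def by auto
  obtain W where W: "W \<subseteq> V" "W \<noteq> {}" and densest: "\<And>W'. W' \<subseteq> V \<Longrightarrow> W' \<noteq> {} \<Longrightarrow>
      card (induced_edges E W') * card W \<le> card (induced_edges E W) * card W'"
    using ex_densest_subset[OF fin(1) False] by blast
  have "finite W" using W(1) fin(1) finite_subset by blast
  have "card (induced_edges E W) \<le> card W * min_degree W (induced_edges E W)"
    using edges W densest \<open>finite W\<close> fin(2) by (intro card_induced_edges_le_min_degree) auto
  also have "\<dots> \<le> card W * degeneracy V E"
    using W fin by (intro mult_left_mono min_degree_le_degeneracy)
      (auto simp: is_subgraph_def induced_edges_def)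
  finally have dense_W: "card (induced_edges E W) \<le> card W * degeneracy V E" .
  have "induced_edges E V = E" using edges by (auto simp: induced_edges_def)
  then have "card E * card W \<le> card (induced_edges E W) * card V"
    using densest[of V] False by simp
  also have "\<dots> \<le> card W * degeneracy V E * card V" using dense_W by simp
  finally have "card W * card E \<le> card W * (card V * degeneracy V E)" by (simp add: ac_simps)
  then show ?thesis using \<open>finite W\<close> W(2) by (simp add: card_gt_0_iff)
qed

lemma double_choose_two: "2 * (n choose 2) = n * (n - 1)"
proof (induction n)
  case (Suc n)
  then show ?case by (cases n) (auto simp: numeral_2_eq_2 algebra_simps)
qed simp

lemma card_pairs_containing:
  assumes "finite V" "x \<in> V"
  shows "card {P. P \<subseteq> V \<and> card P = 2 \<and> x \<in> P} = card V - 1"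
proof -
  have "{P. P \<subseteq> V \<and> card P = 2 \<and> x \<in> P} = (\<lambda>y. {x, y}) ` (V - {x})"
  proof (intro equalityI subsetI)
    fix P assume "P \<in> {P. P \<subseteq> V \<and> card P = 2 \<and> x \<in> P}"
    then obtain y where "P = {x, y}" "y \<noteq> x" "y \<in> V"
      by (auto simp: card_2_iff doubleton_eq_iff)
    then show "P \<in> (\<lambda>y. {x, y}) ` (V - {x})" by blast
  qed (use assms(2) in auto)
  moreover have "inj_on (\<lambda>y. {x, y}) (V - {x})"
    by (auto simp: inj_on_def doubleton_eq_iff)
  ultimately show ?thesis using assms by (simp add: card_image)
qed

lemma sum_pairs_Min_le:
  fixes f :: "'a \<Rightarrow> nat"
  assumes "finite V"
  shows "(\<Sum>P\<in>{P. P \<subseteq> V \<and> card P = 2}. Min (f ` P)) \<le> (card V - 1) * (\<Sum>v\<in>V. f v)"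
proof -
  let ?Ps = "{P. P \<subseteq> V \<and> card P = 2}"
  have "(\<Sum>P\<in>?Ps. Min (f ` P)) \<le> (\<Sum>P\<in>?Ps. \<Sum>v\<in>{v\<in>V. v \<in> P}. f v)"
  proof (rule sum_mono)
    fix P assume "P \<in> ?Ps"
    then obtain u w where "P = {u, w}" "u \<noteq> w" "{v\<in>V. v \<in> P} = P"
      by (auto simp: card_2_iff)
    then show "Min (f ` P) \<le> (\<Sum>v\<in>{v\<in>V. v \<in> P}. f v)" by auto
  qed
  also have "\<dots> = (\<Sum>v\<in>V. \<Sum>P\<in>{P\<in>?Ps. v \<in> P}. f v)"
    using assms by (intro sum.swap_restrict) auto
  also have "\<dots> = (\<Sum>v\<in>V. (card V - 1) * f v)"
    using card_pairs_containing[OF assms] by (intro sum.cong) auto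
  finally show ?thesis by (simp add: sum_distrib_left)
qed

lemma sum_Llist_eq:
  fixes g :: "nat \<Rightarrow> 'c::comm_semiring_1"
  assumes "finite V" "finite I" "\<And>l. l \<in> I \<Longrightarrow> C l \<subseteq> V"
  shows "(\<Sum>v\<in>V. \<Sum>l\<in>Llist I C v. g l) = (\<Sum>l\<in>I. of_nat (card (C l)) * g l)"
proof -
  have "(\<Sum>v\<in>V. \<Sum>l\<in>Llist I C v. g l) = (\<Sum>l\<in>I. \<Sum>v\<in>{v\<in>V. v \<in> C l}. g l)"
    unfolding Llist_def using assms(1,2) by (rule sum.swap_restrict)
  also have "\<dots> = (\<Sum>l\<in>I. of_nat (card (C l)) * g l)"
  proof (intro sum.cong refl)
    fix l assume "l \<in> I"
    then have "{v\<in>V. v \<in> C l} = C l" using assms(3) by blast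
    then show "(\<Sum>v\<in>{v\<in>V. v \<in> C l}. g l) = of_nat (card (C l)) * g l" by simp
  qed
  finally show ?thesis .
qed

lemma card_le_clique_number:
  assumes "finite V" "is_clique V E K"
  shows "card K \<le> clique_number V E"
proof -
  have "{card K | K. is_clique V E K} \<subseteq> card ` Pow V" by (auto simp: is_clique_def)
  then have "finite {card K | K. is_clique V E K}"
    by (rule finite_subset) (use assms(1) in simp)
  moreover have "card K \<in> {card K | K. is_clique V E K}" using assms(2) by blast
  ultimately show ?thesis unfolding clique_number_def by (rule Max_ge)
qed

lemma sum_pairs_Min_card_Llist_le_cover_size:
  assumes "finite V" "clique_cover V E I C"
  shows "(\<Sum>P\<in>{P. P \<subseteq> V \<and> card P = 2}. Min ((\<lambda>x. card (Llist I C x)) ` P))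
    \<le> (card V - 1) * cover_size I C"
proof -
  have "finite I" "\<And>l. l \<in> I \<Longrightarrow> C l \<subseteq> V"
    using assms(2) by (auto simp: clique_cover_def is_clique_def)
  from sum_Llist_eq[OF assms(1) this, where g = "\<lambda>_. 1::nat"]
  have "(\<Sum>v\<in>V. card (Llist I C v)) = cover_size I C" by (simp add: cover_size_def)
  then show ?thesis using sum_pairs_Min_le[OF assms(1)] by metis
qed

lemma sum_pairs_Min_card_Llist_le_card:
  assumes "finite V" "finite I"
  shows "(\<Sum>P\<in>{P. P \<subseteq> V \<and> card P = 2}. Min ((\<lambda>x. card (Llist I C x)) ` P))
    \<le> (card V choose 2) * card I"
proof -
  have "Min ((\<lambda>x. card (Llist I C x)) ` P) \<le> card I" if "card P = 2" for P
  proof -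
    obtain x where "x \<in> P" "finite P" using \<open>card P = 2\<close> by (auto simp: card_2_iff)
    then have "Min ((\<lambda>x. card (Llist I C x)) ` P) \<le> card (Llist I C x)" by simp
    also have "\<dots> \<le> card I" using assms(2) by (intro card_mono) (auto simp: Llist_def)
    finally show ?thesis .
  qed
  then have "(\<Sum>P\<in>{P. P \<subseteq> V \<and> card P = 2}. Min ((\<lambda>x. card (Llist I C x)) ` P))
      \<le> (\<Sum>P\<in>{P. P \<subseteq> V \<and> card P = 2}. card I)"
    by (intro sum_mono) auto
  then show ?thesis using n_subsets[OF assms(1), of 2] by simp
qed

lemma sum_clique_load_eq:
  assumes "finite V" "clique_cover V E I C"
  shows "(\<Sum>v\<in>V. \<Sum>l\<in>Llist I C v. card (C l)) = (\<Sum>l\<in>I. card (C l) ^ 2)"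
  using assms by (subst sum_Llist_eq)
    (auto simp: clique_cover_def is_clique_def power2_eq_square)

lemma sum_clique_load_le:
  assumes "finite V" "clique_cover V E I C"
  shows "(\<Sum>v\<in>V. \<Sum>l\<in>Llist I C v. card (C l)) \<le> clique_number V E * cover_size I C"
    and "(\<Sum>v\<in>V. \<Sum>l\<in>Llist I C v. card (C l)) \<le> clique_number V E * card V * card I"
proof -
  have clique: "is_clique V E (C l)" if "l \<in> I" for l
    using assms(2) that by (simp add: clique_cover_def)
  then have le_\<omega>: "card (C l) \<le> clique_number V E" if "l \<in> I" for l
    using that assms(1) card_le_clique_number by blast
  have "(\<Sum>l\<in>I. card (C l) ^ 2) \<le> (\<Sum>l\<in>I. clique_number V E * card (C l))"
    using le_\<omega> by (intro sum_mono) (simp add: power2_eq_square)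
  then show "(\<Sum>v\<in>V. \<Sum>l\<in>Llist I C v. card (C l)) \<le> clique_number V E * cover_size I C"
    unfolding sum_clique_load_eq[OF assms] cover_size_def by (simp add: sum_distrib_left)
  have "card (C l) \<le> card V" if "l \<in> I" for l
    using clique[OF that] assms(1) by (intro card_mono) (auto simp: is_clique_def)
  then have "(\<Sum>l\<in>I. card (C l) ^ 2) \<le> (\<Sum>l\<in>I. clique_number V E * card V)"
    using le_\<omega> by (intro sum_mono) (simp add: power2_eq_square mult_le_mono)
  then show "(\<Sum>v\<in>V. \<Sum>l\<in>Llist I C v. card (C l)) \<le> clique_number V E * card V * card I"
    unfolding sum_clique_load_eq[OF assms] by (simp add: mult.commute)
qed

lemma card_vertices_ge_two:
  assumes "simple_graph V E" "E \<noteq> {}"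
  shows "card V \<ge> 2"
proof -
  obtain e where "e \<in> E" using assms(2) by blast
  then have "e \<subseteq> V" "card e = 2" "finite V" using assms(1) by (auto simp: simple_graph_def)
  then show ?thesis using card_mono[of V e] by simp
qed

lemma le_mult_card_edges_imp_le_mult_degeneracy:
  assumes "simple_graph V E" "a \<ge> 0" "x \<le> a * real (card E)"
  shows "x \<le> a * (real (card V) * real (degeneracy V E))"
proof -
  have "real (card E) \<le> real (card V) * real (degeneracy V E)"
    using card_edges_le_card_mult_degeneracy[OF assms(1)] by (simp flip: of_nat_mult)
  then show ?thesis using assms(2,3) by (meson mult_left_mono order.trans)
qed

lemma avg_pair_min_card_Llist_le:
  assumes G: "simple_graph V E" "E \<noteq> {}" and cover: "clique_cover V E I C" and "a \<ge> 0"
    and size: "real (cover_size I C) \<le> a * real (card E)"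
    and count: "real (card I) \<le> b * real (clique_distance V E)"
  shows "(1 / real (card V choose 2))
      * (\<Sum>P\<in>{P. P \<subseteq> V \<and> card P = 2}. real (Min ((\<lambda>x. card (Llist I C x)) ` P)))
    \<le> min (b * real (clique_distance V E)) (2 * a * real (degeneracy V E))"
proof -
  define S where "S = (\<Sum>P\<in>{P. P \<subseteq> V \<and> card P = 2}. Min ((\<lambda>x. card (Llist I C x)) ` P))"
  define N where "N = real (card V choose 2)"
  define n where "n = real (card V)"
  have V: "finite V" "card V \<ge> 2" using G card_vertices_ge_two by (auto simp: simple_graph_def)
  have "2 * N = real (card V * (card V - 1))"
    unfolding N_def double_choose_two[symmetric] by simp
  then have N: "N > 0" "2 * N = n * (n - 1)"
    using V(2) unfolding n_def by (simp_all add: N_def of_nat_diff)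
  have "S \<le> (card V choose 2) * card I"
    using sum_pairs_Min_card_Llist_le_card[OF V(1)] cover by (simp add: S_def clique_cover_def)
  then have "real S \<le> N * real (card I)" unfolding N_def by (metis of_nat_le_iff of_nat_mult)
  also have "\<dots> \<le> N * (b * real (clique_distance V E))"
    using count N(1) by simp
  finally have by_count: "real S \<le> N * (b * real (clique_distance V E))" .
  have "S \<le> (card V - 1) * cover_size I C"
    using sum_pairs_Min_card_Llist_le_cover_size[OF V(1) cover] by (simp add: S_def)
  then have "real S \<le> real (card V - 1) * real (cover_size I C)"
    by (metis of_nat_le_iff of_nat_mult)
  also have "\<dots> \<le> (n - 1) * (a * (n * real (degeneracy V E)))"
    using le_mult_card_edges_imp_le_mult_degeneracy[OF G(1) \<open>a \<ge> 0\<close> size] V(2)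
    unfolding n_def by (intro mult_mono) (auto simp: of_nat_diff)
  also have "\<dots> = a * real (degeneracy V E) * (n * (n - 1))"
    by (simp add: algebra_simps)
  also have "\<dots> = N * (2 * a * real (degeneracy V E))"
    unfolding N(2)[symmetric] by (simp add: algebra_simps)
  finally have by_size: "real S \<le> N * (2 * a * real (degeneracy V E))" .
  have "real S / N \<le> min (b * real (clique_distance V E)) (2 * a * real (degeneracy V E))"
    using by_count by_size N(1) by (simp add: pos_divide_le_eq mult.commute)
  then show ?thesis unfolding S_def N_def by (simp add: of_nat_sum)
qed

lemma avg_clique_load_le:
  assumes G: "simple_graph V E" "E \<noteq> {}" and cover: "clique_cover V E I C" and "a \<ge> 0"
    and size: "real (cover_size I C) \<le> a * real (card E)"
    and count: "real (card I) \<le> b * real (clique_distance V E)"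
  shows "(1 / real (card V)) * (\<Sum>v\<in>V. \<Sum>l\<in>Llist I C v. real (card (C l)))
    \<le> real (clique_number V E) * min (b * real (clique_distance V E)) (a * real (degeneracy V E))"
proof -
  define T where "T = (\<Sum>v\<in>V. \<Sum>l\<in>Llist I C v. card (C l))"
  define \<omega> where "\<omega> = real (clique_number V E)"
  define n where "n = real (card V)"
  have V: "finite V" and "n > 0"
    using G card_vertices_ge_two unfolding n_def by (auto simp: simple_graph_def)
  have "real T \<le> \<omega> * real (cover_size I C)"
    using sum_clique_load_le(1)[OF V cover] unfolding T_def \<omega>_def by (metis of_nat_le_iff of_nat_mult)
  also have "\<dots> \<le> \<omega> * (a * (n * real (degeneracy V E)))"
    using le_mult_card_edges_imp_le_mult_degeneracy[OF G(1) \<open>a \<ge> 0\<close> size]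
    unfolding \<omega>_def n_def by (intro mult_left_mono) auto
  finally have by_size: "real T \<le> n * (\<omega> * (a * real (degeneracy V E)))" by (simp add: ac_simps)
  have "real T \<le> \<omega> * n * real (card I)"
    using sum_clique_load_le(2)[OF V cover] unfolding T_def \<omega>_def n_def by (metis of_nat_le_iff of_nat_mult)
  also have "\<dots> \<le> \<omega> * n * (b * real (clique_distance V E))"
    using count \<open>n > 0\<close> unfolding \<omega>_def by (intro mult_left_mono) auto
  finally have by_count: "real T \<le> n * (\<omega> * (b * real (clique_distance V E)))" by (simp add: ac_simps)
  have "real T / n \<le> \<omega> * min (b * real (clique_distance V E)) (a * real (degeneracy V E))"
    using by_count by_size \<open>n > 0\<close> by (simp add: pos_divide_le_eq min_def mult.commute)
  then show ?thesis unfolding T_def \<omega>_def n_def by (simp add: of_nat_sum)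
qed

lemma min_mult_le_add_mult_min:
  fixes a b x y :: "'a::linordered_semiring"
  assumes "a \<ge> 0" "b \<ge> 0" "x \<ge> 0" "y \<ge> 0"
  shows "min (a * x) (b * y) \<le> (a + b) * min x y"
proof (cases "x \<le> y")
  case True
  have "min (a * x) (b * y) \<le> a * x + b * x" using assms by (simp add: min.coboundedI1)
  then show ?thesis using True by (simp add: distrib_right min_def)
next
  case False
  have "min (a * x) (b * y) \<le> a * y + b * y" using assms by (simp add: min.coboundedI2)
  then show ?thesis using False by (simp add: distrib_right min_def)
qed

theorem mainTheorem7:
  fixes a b :: real
  assumes "a > 0" and "b > 0"
  shows "\<exists>c::real. \<forall>V E I C.
    simple_graph V E \<and> card E \<ge> 1 \<and> clique_cover V E I C \<and> composition_minimal V E I C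
    \<and> real (cover_size I C) \<le> a * real (card E)
    \<and> real (card I) \<le> b * real (clique_distance V E)
    \<longrightarrow>
    (1 / real (card V choose 2)) * (\<Sum>P\<in>{P. P \<subseteq> V \<and> card P = 2}. real (Min ((\<lambda>x. card (Llist I C x)) ` P)))
        \<le> c * real (min (clique_distance V E) (degeneracy V E))
    \<and> (1 / real (card V)) * (\<Sum>v\<in>V. \<Sum>l\<in>Llist I C v. real (card (C l)))
        \<le> c * real (clique_number V E) * real (min (clique_distance V E) (degeneracy V E))"
proof (intro exI[of _ "2 * a + b"] allI impI, elim conjE)
  fix V E I C
  assume G: "simple_graph V E" "card E \<ge> 1" and cover: "clique_cover V E I C"
    and size: "real (cover_size I C) \<le> a * real (card E)"
    and count: "real (card I) \<le> b * real (clique_distance V E)"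
  let ?\<sigma> = "clique_distance V E" and ?d = "degeneracy V E" and ?\<omega> = "clique_number V E"
  have E: "E \<noteq> {}" using G(2) by auto
  have a: "a \<ge> 0" using assms(1) by simp
  have min_le: "min (b * real ?\<sigma>) (2 * a * real ?d) \<le> (2 * a + b) * real (min ?\<sigma> ?d)"
    using min_mult_le_add_mult_min[of b "2 * a"] assms by (simp add: of_nat_min add.commute)
  have "min (b * real ?\<sigma>) (a * real ?d) \<le> min (b * real ?\<sigma>) (2 * a * real ?d)"
    using assms by (intro min.mono) auto
  then have "real ?\<omega> * min (b * real ?\<sigma>) (a * real ?d) \<le> real ?\<omega> * ((2 * a + b) * real (min ?\<sigma> ?d))"
    by (intro mult_left_mono order.trans[OF _ min_le]) auto
  then have load_le: "real ?\<omega> * min (b * real ?\<sigma>) (a * real ?d) \<le> (2 * a + b) * real ?\<omega> * real (min ?\<sigma> ?d)"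
    by (simp add: ac_simps)
  show "(1 / real (card V choose 2))
        * (\<Sum>P\<in>{P. P \<subseteq> V \<and> card P = 2}. real (Min ((\<lambda>x. card (Llist I C x)) ` P)))
      \<le> (2 * a + b) * real (min ?\<sigma> ?d)
    \<and> (1 / real (card V)) * (\<Sum>v\<in>V. \<Sum>l\<in>Llist I C v. real (card (C l)))
      \<le> (2 * a + b) * real ?\<omega> * real (min ?\<sigma> ?d)"
    by (intro conjI order.trans[OF avg_pair_min_card_Llist_le[OF G(1) E cover a size count] min_le]
        order.trans[OF avg_clique_load_le[OF G(1) E cover a size count] load_le])
qed

end
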